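(* Let $T$ be an interval exchange transformation of $[0,1)$. Then $C_\psi(T)\le\min(1,\tau(T))$. In particular, if $\tau(T)=0$ then $C_\psi(T)=0$.
   Context: An $r$-interval exchange transformation is given by a permutation $\pi$ of $\{1,\dots,r\}$ and lengths $\ell_i>0$ with $\sum\ell_i=1$: with $s_0=0$, $s_k=\sum_{i\le k}\ell_i$, $I_k=[s_{k-1},s_k)$, $T(x)=x-\sum_{i<k}\ell_i+\sum_{\pi(i')<\pi(k)}\ell_{i'}$ for $x\in I_k$. Let $\oplus,\ominus$ denote addition and subtraction modulo $1$ on $[0,1)$. Set $\Delta(T)=\{T(x)\ominus x: x\in[0,1)\}$ (a finite set), $\Delta'(T)=\{u\ominus v: u,v\in\Delta(T)\}$, $\Delta'_n(T)=\bigcup_{k=1}^n\Delta'(T^k)$, and the $\tau$-entropy $\tau(T)=\limsup_{n\to\infty}\frac{\log\operatorname{card}\Delta'_n(T)}{\log n}$. With $\lambda$ Lebesgue measure and $\|t\|$ the distance from $t$ to the nearest integer, $C_\psi(T)=\sup\big(\{0\}\cup\{\alpha>0:\liminf_n n^\alpha\|T^nx-T^ny\|=0\text{ for }\lambda\times\lambda\text{-a.e. }(x,y)\}\big)$. *)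

theory Defs
  imports "HOL-Analysis.Analysis" "HOL-Combinatorics.Permutations"
begin

definition iet_s :: "(nat \<Rightarrow> real) \<Rightarrow> nat \<Rightarrow> real" where
  "iet_s l k = (\<Sum>i\<in>{1..k}. l i)"

definition iet :: "nat \<Rightarrow> (nat \<Rightarrow> nat) \<Rightarrow> (nat \<Rightarrow> real) \<Rightarrow> real \<Rightarrow> real" where
  "iet r p l x =
     (let k = (THE k. k \<in> {1..r} \<and> iet_s l (k - 1) \<le> x \<and> x < iet_s l k)
      in x - iet_s l (k - 1) + (\<Sum>i'\<in>{i'\<in>{1..r}. p i' < p k}. l i'))"

definition msub :: "real \<Rightarrow> real \<Rightarrow> real" where
  "msub u v = frac (u - v)"

definition dnint :: "real \<Rightarrow> real" where
  "dnint t = \<bar>t - of_int (round t)\<bar>"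

definition Delta :: "(real \<Rightarrow> real) \<Rightarrow> real set" where
  "Delta T = {msub (T x) x | x. x \<in> {0..<1}}"

definition Delta' :: "(real \<Rightarrow> real) \<Rightarrow> real set" where
  "Delta' T = {msub u v | u v. u \<in> Delta T \<and> v \<in> Delta T}"

definition Delta'_n :: "(real \<Rightarrow> real) \<Rightarrow> nat \<Rightarrow> real set" where
  "Delta'_n T n = (\<Union>k\<in>{1..n}. Delta' (T ^^ k))"

definition tau_entropy :: "(real \<Rightarrow> real) \<Rightarrow> ereal" where
  "tau_entropy T = limsup (\<lambda>n. ereal (ln (real (card (Delta'_n T n))) / ln (real n)))"

definition C_psi :: "(real \<Rightarrow> real) \<Rightarrow> ereal" where
  "C_psi T = Sup ({0} \<union> ereal ` {\<alpha>::real. \<alpha> > 0 \<and>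
     (AE p in (restrict_space lborel {0..<1::real} \<Otimes>\<^sub>M restrict_space lborel {0..<1::real}).
        liminf (\<lambda>n. ereal (real n powr \<alpha> * dnint ((T ^^ n) (fst p) - (T ^^ n) (snd p)))) = 0)})"

end

theory Submission
  imports Defs "HOL-Probability.Probability_Measure"
begin

text \<open>An interval exchange T is an injective map of [0,1) into itself that moves each point by
  one of finitely many translations; every iterate T^n is again of this kind, and such a map never
  increases Lebesgue measure under preimages. Hence, for fixed x, the set of y with
  \<parallel>T^n x - T^n y\<parallel> < n^-\<beta> has measure at most 6 n^-\<beta>, which is summable for \<beta> > 1,
  and Borel-Cantelli gives C_psi(T) \<le> 1.
  On the other hand T^n x - T^n y \<equiv> x - y + d (mod 1) for some d \<in> \<Delta>'_n(T). If
  card \<Delta>'_N(T) \<le> N^\<gamma>, then on the dyadic block 2^k \<le> n < 2^(k+1) closeness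
  \<parallel>T^n x - T^n y\<parallel> < 2^(-k\<beta>) forces y into at most 2^((k+1)\<gamma>) arcs of length
  2^(1-k\<beta>), a summable total for \<beta> > \<gamma>; Borel-Cantelli again gives C_psi(T) \<le> \<gamma>
  for every \<gamma> > \<tau>(T).\<close>

section \<open>Distance to the nearest integer\<close>

lemma dnint_add_of_int: "dnint (t + of_int m) = dnint t"
proof -
  have "\<bar>t + of_int m - of_int (round (t + of_int m))\<bar> \<le> \<bar>t + of_int m - of_int (round t + m)\<bar>"
    by (rule round_diff_minimal)
  moreover have "\<bar>t - of_int (round t)\<bar> \<le> \<bar>t - of_int (round (t + of_int m) - m)\<bar>"
    by (rule round_diff_minimal)
  ultimately show ?thesis
    unfolding dnint_def by (simp add: algebra_simps)
qed

lemma dnint_nonneg: "0 \<le> dnint t"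
  by (simp add: dnint_def)

lemma borel_measurable_dnint [measurable]: "dnint \<in> borel_measurable borel"
  unfolding dnint_def round_def by measurable

lemma emeasure_dnint_diff_less_le:
  fixes a \<epsilon> :: real
  shows "emeasure lborel {v\<in>{0..<1}. dnint (a - v) < \<epsilon>} \<le> ennreal (6 * \<epsilon>)"
proof (cases "\<epsilon> > 0")
  case False
  then have "{v\<in>{0..<1}. dnint (a - v) < \<epsilon>} = {}"
    using dnint_nonneg by (auto simp: not_less intro: order.trans)
  then show ?thesis
    by (metis emeasure_empty zero_le)
next
  case True
  define f where "f = \<lfloor>a\<rfloor>"
  define I where "I m = {a - of_int m - \<epsilon> <..< a - of_int m + \<epsilon>}" for m :: int
  have cover: "{v\<in>{0..<1}. dnint (a - v) < \<epsilon>} \<subseteq> (\<Union>m\<in>{f-1..f+1}. I m)"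
  proof
    fix v assume v: "v \<in> {v\<in>{0..<1}. dnint (a - v) < \<epsilon>}"
    define m where "m = round (a - v)"
    have close: "\<bar>a - v - of_int m\<bar> < \<epsilon>"
      using v by (simp add: dnint_def m_def)
    have "\<bar>of_int m - (a - v)\<bar> \<le> 1/2"
      unfolding m_def by (rule of_int_round_abs_le)
    then have "a - v - 1/2 \<le> of_int m" "of_int m \<le> a - v + 1/2"
      unfolding abs_le_iff by linarith+
    moreover have "of_int f \<le> a" "a < of_int f + 1"
      unfolding f_def by linarith+
    ultimately have "real_of_int (f - 2) < of_int m" "of_int m < real_of_int (f + 2)"
      using v by simp_all
    then have "m \<in> {f-1..f+1}"
      unfolding of_int_less_iff by simp
    moreover have "v \<in> I m"
      using close unfolding I_def by (auto simp: abs_less_iff)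
    ultimately show "v \<in> (\<Union>m\<in>{f-1..f+1}. I m)"
      by blast
  qed
  have "emeasure lborel {v\<in>{0..<1}. dnint (a - v) < \<epsilon>} \<le> emeasure lborel (\<Union>m\<in>{f-1..f+1}. I m)"
    by (rule emeasure_mono[OF cover]) (auto simp: I_def)
  also have "\<dots> \<le> (\<Sum>m\<in>{f-1..f+1}. emeasure lborel (I m))"
    by (rule emeasure_subadditive_finite) (auto simp: I_def)
  also have "\<dots> = (\<Sum>m\<in>{f-1..f+1}. ennreal (2 * \<epsilon>))"
    using True by (intro sum.cong) (auto simp: I_def)
  also have "\<dots> = ennreal 3 * ennreal (2 * \<epsilon>)"
    by simp
  also have "\<dots> = ennreal (6 * \<epsilon>)"
    using True by (subst ennreal_mult[symmetric]) auto
  finally show ?thesis .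
qed

section \<open>Piecewise translations\<close>

lemma emeasure_lborel_translate:
  fixes A :: "real set"
  assumes "A \<in> sets borel"
  shows "emeasure lborel {z. z - c \<in> A} = emeasure lborel A"
proof -
  have "emeasure lborel A = emeasure (distr lborel borel ((+) (- c))) A"
    by (simp add: lborel_distr_plus)
  also have "\<dots> = emeasure lborel ((+) (- c) -` A \<inter> space lborel)"
    by (rule emeasure_distr) (use assms in auto)
  also have "(+) (- c) -` A \<inter> space lborel = {z. z - c \<in> A}"
    by auto
  finally show ?thesis
    by simp
qed

definition piecewise_translation :: "(real \<Rightarrow> real) \<Rightarrow> bool" where
  "piecewise_translation f \<longleftrightarrow>
     f \<in> borel_measurable borel \<and> inj_on f {0..<1} \<and> f ` {0..<1} \<subseteq> {0..<1} \<and>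
     finite ((\<lambda>x. f x - x) ` {0..<1})"

lemma piecewise_translation_id: "piecewise_translation id"
  by (simp add: piecewise_translation_def image_constant_conv)

lemma piecewise_translation_comp:
  assumes f: "piecewise_translation f" and g: "piecewise_translation g"
  shows "piecewise_translation (f \<circ> g)"
proof -
  have "(\<lambda>x. (f \<circ> g) x - x) ` {0..<1}
      \<subseteq> (\<lambda>(u, v). u + v) ` ((\<lambda>x. f x - x) ` {0..<1} \<times> (\<lambda>x. g x - x) ` {0..<1})"
  proof
    fix z assume "z \<in> (\<lambda>x. (f \<circ> g) x - x) ` {0..<1}"
    then obtain x where x: "x \<in> {0..<1}" and z: "z = f (g x) - g x + (g x - x)"
      by auto
    have "g x \<in> {0..<1}"
      using g x unfolding piecewise_translation_def by blast
    then show "z \<in> (\<lambda>(u, v). u + v) ` ((\<lambda>x. f x - x) ` {0..<1} \<times> (\<lambda>x. g x - x) ` {0..<1})"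
      using x z by (auto intro!: image_eqI[of _ _ "(f (g x) - g x, g x - x)"])
  qed
  then have "finite ((\<lambda>x. (f \<circ> g) x - x) ` {0..<1})"
    by (rule finite_subset) (use f g in \<open>simp add: piecewise_translation_def\<close>)
  moreover have "inj_on (f \<circ> g) {0..<1}"
    using f g by (auto simp: piecewise_translation_def intro: comp_inj_on inj_on_subset)
  moreover have "(f \<circ> g) ` {0..<1} \<subseteq> {0..<1}"
    using f g unfolding piecewise_translation_def by (fastforce simp: image_subset_iff)
  ultimately show ?thesis
    using f g measurable_comp[of g borel borel f borel] by (simp add: piecewise_translation_def)
qed

lemma piecewise_translation_funpow:
  "piecewise_translation f \<Longrightarrow> piecewise_translation (f ^^ n)"
  by (induction n) (simp_all add: piecewise_translation_id piecewise_translation_comp)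

text \<open>The pieces of f are translated to pairwise disjoint places.\<close>
lemma emeasure_preimage_le_of_piecewise_translation:
  assumes f: "piecewise_translation f" and B: "B \<in> sets borel"
  shows "emeasure lborel {y\<in>{0..<1}. f y \<in> B} \<le> emeasure lborel {v\<in>{0..<1}. v \<in> B}"
proof -
  define C where "C = (\<lambda>x. f x - x) ` {0..<1}"
  define A where "A c = {y\<in>{0..<1}. f y - y = c \<and> f y \<in> B}" for c
  define D where "D c = {z. z - c \<in> A c}" for c
  have C: "finite C"
    using f by (simp add: C_def piecewise_translation_def)
  have [measurable]: "f \<in> borel_measurable borel"
    using f by (simp add: piecewise_translation_def)
  have A_sets: "A c \<in> sets borel" for c
    unfolding A_def using B by measurable
  have "{y\<in>{0..<1}. f y \<in> B} = (\<Union>c\<in>C. A c)"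
    by (auto simp: A_def C_def)
  then have "emeasure lborel {y\<in>{0..<1}. f y \<in> B} \<le> (\<Sum>c\<in>C. emeasure lborel (A c))"
    using emeasure_subadditive_finite[OF C, of A lborel] A_sets by auto
  also have "\<dots> = (\<Sum>c\<in>C. emeasure lborel (D c))"
    unfolding D_def using emeasure_lborel_translate[OF A_sets] by simp
  also have "\<dots> = emeasure lborel (\<Union>c\<in>C. D c)"
  proof (rule sum_emeasure[OF _ _ C])
    show "D ` C \<subseteq> sets lborel"
      unfolding D_def using A_sets by auto
    have "c = c'" if "z \<in> D c" "z \<in> D c'" for z c c'
    proof -
      have "z - c \<in> {0..<1}" "z - c' \<in> {0..<1}" "f (z - c) = f (z - c')"
        using that by (auto simp: D_def A_def)
      then show "c = c'"
        using f by (auto simp: piecewise_translation_def dest: inj_onD)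
    qed
    then show "disjoint_family_on D C"
      unfolding disjoint_family_on_def by blast
  qed
  also have "\<dots> \<le> emeasure lborel {v\<in>{0..<1}. v \<in> B}"
  proof (rule emeasure_mono)
    show "(\<Union>c\<in>C. D c) \<subseteq> {v\<in>{0..<1}. v \<in> B}"
    proof
      fix z assume "z \<in> (\<Union>c\<in>C. D c)"
      then obtain c where "z - c \<in> {0..<1}" "z = f (z - c)" "f (z - c) \<in> B"
        by (auto simp: D_def A_def)
      moreover have "f (z - c) \<in> {0..<1}"
        using f \<open>z - c \<in> {0..<1}\<close> unfolding piecewise_translation_def by blast
      ultimately show "z \<in> {v\<in>{0..<1}. v \<in> B}"
        by simp
    qed
  qed (use B in auto)
  finally show ?thesis .
qed

section \<open>The difference sets and the \<open>\<tau>\<close>-entropy\<close>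

lemma finite_Delta'_n:
  assumes "piecewise_translation f"
  shows "finite (Delta'_n f n)"
proof -
  have finite_Delta: "finite (Delta (f ^^ k))" for k
  proof -
    have "Delta (f ^^ k) = frac ` (\<lambda>x. (f ^^ k) x - x) ` {0..<1}"
      by (auto simp: Delta_def msub_def)
    then show ?thesis
      using piecewise_translation_funpow[OF assms, of k] by (simp add: piecewise_translation_def)
  qed
  have "Delta' (f ^^ k) = (\<lambda>(u, v). msub u v) ` (Delta (f ^^ k) \<times> Delta (f ^^ k))" for k
    by (auto simp: Delta'_def)
  then have "finite (Delta' (f ^^ k))" for k
    using finite_Delta by simp
  then show ?thesis
    unfolding Delta'_n_def by simp
qed

lemma dnint_funpow_diff_eq:
  assumes x: "x \<in> {0..<1}" and y: "y \<in> {0..<1}" and n: "1 \<le> n" "n \<le> N"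
  shows "\<exists>d\<in>Delta'_n f N. dnint ((f ^^ n) x - (f ^^ n) y) = dnint (x - y + d)"
proof
  define u where "u = msub ((f ^^ n) x) x"
  define v where "v = msub ((f ^^ n) y) y"
  have "u \<in> Delta (f ^^ n)" "v \<in> Delta (f ^^ n)"
    using x y unfolding Delta_def u_def v_def by blast+
  then have "msub u v \<in> Delta' (f ^^ n)"
    unfolding Delta'_def by blast
  then show "msub u v \<in> Delta'_n f N"
    using n unfolding Delta'_n_def by auto
  have "x - y + msub u v = ((f ^^ n) x - (f ^^ n) y)
      + of_int (\<lfloor>(f ^^ n) y - y\<rfloor> - \<lfloor>(f ^^ n) x - x\<rfloor> - \<lfloor>u - v\<rfloor>)"
    by (simp add: u_def v_def msub_def frac_def)
  then show "dnint ((f ^^ n) x - (f ^^ n) y) = dnint (x - y + msub u v)"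
    by (simp only: dnint_add_of_int)
qed

lemma tau_entropy_nonneg: "0 \<le> tau_entropy f"
  unfolding tau_entropy_def
proof (rule le_Limsup)
  show "eventually (\<lambda>n. 0 \<le> ereal (ln (real (card (Delta'_n f n))) / ln (real n))) sequentially"
  proof (rule eventually_mono[OF eventually_ge_at_top[of "1::nat"]])
    fix n :: nat assume "1 \<le> n"
    have "0 \<le> ln (real (card (Delta'_n f n)))"
      by (cases "card (Delta'_n f n)") auto
    then show "0 \<le> ereal (ln (real (card (Delta'_n f n))) / ln (real n))"
      using \<open>1 \<le> n\<close> by simp
  qed
qed simp

lemma eventually_card_Delta'_n_le_powr:
  assumes "tau_entropy f < ereal \<gamma>"
  shows "eventually (\<lambda>N. real (card (Delta'_n f N)) \<le> real N powr \<gamma>) sequentially"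
proof -
  have "eventually (\<lambda>N. ereal (ln (real (card (Delta'_n f N))) / ln (real N)) < ereal \<gamma>) sequentially"
    using assms unfolding tau_entropy_def by (rule Limsup_lessD)
  then show ?thesis
    using eventually_ge_at_top[of "2::nat"]
  proof eventually_elim
    case (elim N)
    have "ln (real (card (Delta'_n f N))) \<le> \<gamma> * ln (real N)"
      using elim by (simp add: divide_less_eq)
    then have "exp (ln (real (card (Delta'_n f N)))) \<le> exp (\<gamma> * ln (real N))"
      by simp
    then show ?case
      using elim by (cases "card (Delta'_n f N) = 0") (simp_all add: powr_def)
  qed
qed

section \<open>Borel-Cantelli estimates on the unit square\<close>

abbreviation unit_interval_measure :: "real measure" where
  "unit_interval_measure \<equiv> restrict_space lborel {0..<1::real}"

abbreviation unit_square_measure :: "(real \<times> real) measure" where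
  "unit_square_measure \<equiv> unit_interval_measure \<Otimes>\<^sub>M unit_interval_measure"

abbreviation approaches_at_rate :: "(real \<Rightarrow> real) \<Rightarrow> real \<Rightarrow> bool" where
  "approaches_at_rate f \<alpha> \<equiv> AE \<omega> in unit_square_measure.
     liminf (\<lambda>n. ereal (real n powr \<alpha> * dnint ((f ^^ n) (fst \<omega>) - (f ^^ n) (snd \<omega>)))) = 0"

lemma space_unit_interval_measure [simp]: "space unit_interval_measure = {0..<1}"
  by (simp add: space_restrict_space)

lemma space_unit_square_measure [simp]: "space unit_square_measure = {0..<1} \<times> {0..<1}"
  by (simp add: space_pair_measure)

interpretation unit_interval: prob_space unit_interval_measure
  by (rule prob_space_restrict_space) auto

interpretation unit_square: pair_prob_space unit_interval_measure unit_interval_measure ..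

lemma measurable_unit_interval_measure:
  "f \<in> borel_measurable borel \<Longrightarrow> f \<in> borel_measurable unit_interval_measure"
  by (rule measurable_restrict_space1) simp

lemma borel_measurable_fst_unit_square [measurable]: "fst \<in> borel_measurable unit_square_measure"
  by (rule measurable_compose[OF measurable_fst measurable_unit_interval_measure]) simp

lemma borel_measurable_snd_unit_square [measurable]: "snd \<in> borel_measurable unit_square_measure"
  by (rule measurable_compose[OF measurable_snd measurable_unit_interval_measure]) simp

lemma emeasure_unit_square_le_of_slices:
  assumes Q: "{\<omega>\<in>space unit_square_measure. Q \<omega>} \<in> sets unit_square_measure"
    and slices: "\<And>x. x \<in> {0..<1} \<Longrightarrow> emeasure lborel {y\<in>{0..<1}. Q (x, y)} \<le> e"
  shows "emeasure unit_square_measure {\<omega>\<in>space unit_square_measure. Q \<omega>} \<le> e"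
proof -
  have "emeasure unit_square_measure {\<omega>\<in>space unit_square_measure. Q \<omega>}
      = (\<integral>\<^sup>+x. emeasure unit_interval_measure (Pair x -` {\<omega>\<in>space unit_square_measure. Q \<omega>})
          \<partial>unit_interval_measure)"
    by (rule unit_interval.emeasure_pair_measure_alt[OF Q])
  also have "\<dots> \<le> (\<integral>\<^sup>+x. e \<partial>unit_interval_measure)"
  proof (rule nn_integral_mono)
    fix x assume x: "x \<in> space unit_interval_measure"
    then have "Pair x -` {\<omega>\<in>space unit_square_measure. Q \<omega>} = {y\<in>{0..<1}. Q (x, y)}"
      by auto
    then show "emeasure unit_interval_measure (Pair x -` {\<omega>\<in>space unit_square_measure. Q \<omega>}) \<le> e"
      using slices[of x] x by (subst emeasure_restrict_space) auto
  qed
  also have "\<dots> = e"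
    using unit_interval.emeasure_space_1 by simp
  finally show ?thesis .
qed

lemma (in prob_space) not_AE_liminf_eq_0:
  assumes G: "\<And>n. G n \<in> events" and summable: "summable (\<lambda>n. prob (G n))"
    and large: "\<And>\<omega>. \<omega> \<in> space M \<Longrightarrow> eventually (\<lambda>n. \<omega> \<notin> G n) sequentially \<Longrightarrow>
        eventually (\<lambda>n. 1 \<le> h n \<omega>) sequentially"
  shows "\<not> (AE \<omega> in M. liminf (\<lambda>n. ereal (h n \<omega>)) = 0)"
proof
  assume liminf: "AE \<omega> in M. liminf (\<lambda>n. ereal (h n \<omega>)) = 0"
  have "AE \<omega> in M. eventually (\<lambda>n. \<omega> \<in> space M - G n) sequentially"
    using G summable by (intro borel_cantelli_AE1) (auto simp: less_top[symmetric])
  then have "AE \<omega> in M. False"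
    using liminf AE_space
  proof eventually_elim
    case (elim \<omega>)
    then have "eventually (\<lambda>n. ereal 1 \<le> ereal (h n \<omega>)) sequentially"
      using large[of \<omega>] by (auto elim: eventually_mono)
    then have "ereal 1 \<le> liminf (\<lambda>n. ereal (h n \<omega>))"
      by (rule Liminf_bounded)
    then show False
      using elim by simp
  qed
  then show False
    by simp
qed

lemma C_psi_le:
  assumes "0 \<le> b"
    and "\<And>\<alpha>. 0 < \<alpha> \<Longrightarrow> b < ereal \<alpha> \<Longrightarrow> \<not> approaches_at_rate f \<alpha>"
  shows "C_psi f \<le> b"
  unfolding C_psi_def by (intro Sup_least) (use assms not_le in fastforce)

lemma C_psi_nonneg: "0 \<le> C_psi f"
  unfolding C_psi_def by (rule Sup_upper) simp

lemma one_le_powr_mult: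
  fixes n t :: real
  assumes "1 \<le> n" "\<beta> \<le> \<alpha>" "n powr (- \<beta>) \<le> t"
  shows "1 \<le> n powr \<alpha> * t"
proof -
  have "1 \<le> n powr (\<alpha> - \<beta>)"
    using assms by (intro ge_one_powr_ge_zero) auto
  also have "\<dots> = n powr \<alpha> * n powr (- \<beta>)"
    by (simp add: powr_add[symmetric])
  also have "\<dots> \<le> n powr \<alpha> * t"
    using assms by (intro mult_left_mono) auto
  finally show ?thesis .
qed

lemma power_powr:
  fixes x :: real
  assumes "0 < x"
  shows "(x ^ n) powr a = (x powr a) ^ n"
  using assms by (simp add: powr_realpow[symmetric] powr_powr powr_power mult.commute)

lemma eventually_dyadic_block:
  assumes "eventually P sequentially"
  shows "eventually (\<lambda>n. \<exists>k. 2 ^ k \<le> n \<and> n < 2 ^ (k + 1) \<and> P k) sequentially"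
proof -
  obtain K where K: "\<And>k. K \<le> k \<Longrightarrow> P k"
    using assms unfolding eventually_sequentially by blast
  have "\<exists>k. 2 ^ k \<le> n \<and> n < 2 ^ (k + 1) \<and> P k" if n: "2 ^ K \<le> n" for n :: nat
  proof -
    have "1 \<le> n"
      using n order.trans[OF one_le_power n] by simp
    then obtain k :: nat where k: "2 ^ k \<le> n" "n < 2 ^ (k + 1)"
      using ex_power_ivl1[of 2 n] by auto
    have "(2::nat) ^ K < 2 ^ (k + 1)"
      using n k by simp
    then have "K < k + 1"
      by (rule power_less_imp_less_exp[rotated]) simp
    then have "K \<le> k"
      by simp
    then show ?thesis
      using k K by blast
  qed
  then show ?thesis
    unfolding eventually_sequentially by blast
qed

lemma emeasure_close_orbits_le:
  assumes f: "piecewise_translation f"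
  shows "emeasure unit_square_measure
      {\<omega>\<in>space unit_square_measure. dnint ((f ^^ n) (fst \<omega>) - (f ^^ n) (snd \<omega>)) < \<epsilon>}
    \<le> ennreal (6 * \<epsilon>)"
proof (rule emeasure_unit_square_le_of_slices)
  have fn: "piecewise_translation (f ^^ n)"
    using f by (rule piecewise_translation_funpow)
  then have [measurable]: "(f ^^ n) \<in> borel_measurable borel"
    by (simp add: piecewise_translation_def)
  show "{\<omega>\<in>space unit_square_measure. dnint ((f ^^ n) (fst \<omega>) - (f ^^ n) (snd \<omega>)) < \<epsilon>}
      \<in> sets unit_square_measure"
    by measurable
  fix x :: real
  define B where "B = {v. dnint ((f ^^ n) x - v) < \<epsilon>}"
  have "B \<in> sets borel"
    unfolding B_def by measurable
  with fn have "emeasure lborel {y\<in>{0..<1}. (f ^^ n) y \<in> B} \<le> emeasure lborel {v\<in>{0..<1}. v \<in> B}"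
    by (rule emeasure_preimage_le_of_piecewise_translation)
  also have "\<dots> \<le> ennreal (6 * \<epsilon>)"
    unfolding B_def mem_Collect_eq by (rule emeasure_dnint_diff_less_le)
  finally show "emeasure lborel {y\<in>{0..<1}. dnint ((f ^^ n) (fst (x, y)) - (f ^^ n) (snd (x, y))) < \<epsilon>}
      \<le> ennreal (6 * \<epsilon>)"
    by (simp add: B_def)
qed

lemma emeasure_near_shifted_diagonals_le:
  assumes D: "finite D"
  shows "emeasure unit_square_measure
      {\<omega>\<in>space unit_square_measure. \<exists>d\<in>D. dnint (fst \<omega> - snd \<omega> + d) < \<epsilon>}
    \<le> ennreal (real (card D) * (6 * \<epsilon>))"
proof (rule emeasure_unit_square_le_of_slices)
  show "{\<omega>\<in>space unit_square_measure. \<exists>d\<in>D. dnint (fst \<omega> - snd \<omega> + d) < \<epsilon>}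
      \<in> sets unit_square_measure"
    using D by measurable
  fix x :: real
  have arcs: "{v\<in>{0..<1}. dnint ((x + d) - v) < \<epsilon>} \<in> sets lborel" for d
    by measurable
  have "{y\<in>{0..<1}. \<exists>d\<in>D. dnint (fst (x, y) - snd (x, y) + d) < \<epsilon>}
      = (\<Union>d\<in>D. {v\<in>{0..<1}. dnint ((x + d) - v) < \<epsilon>})"
    by (auto simp: algebra_simps)
  also have "emeasure lborel \<dots> \<le> (\<Sum>d\<in>D. emeasure lborel {v\<in>{0..<1}. dnint ((x + d) - v) < \<epsilon>})"
    using D arcs by (intro emeasure_subadditive_finite) auto
  also have "\<dots> \<le> (\<Sum>d\<in>D. ennreal (6 * \<epsilon>))"
    by (intro sum_mono emeasure_dnint_diff_less_le)
  also have "\<dots> = ennreal (real (card D) * (6 * \<epsilon>))"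
    by (simp add: ennreal_mult' ennreal_of_nat_eq_real_of_nat)
  finally show "emeasure lborel {y\<in>{0..<1}. \<exists>d\<in>D. dnint (fst (x, y) - snd (x, y) + d) < \<epsilon>}
      \<le> ennreal (real (card D) * (6 * \<epsilon>))" .
qed

lemma not_approaches_at_rate_gt_one:
  assumes f: "piecewise_translation f" and "1 < \<alpha>"
  shows "\<not> approaches_at_rate f \<alpha>"
proof -
  define \<beta> where "\<beta> = (1 + \<alpha>) / 2"
  have \<beta>: "1 < \<beta>" "\<beta> < \<alpha>"
    using assms(2) by (auto simp: \<beta>_def)
  define G where "G n = {\<omega>\<in>space unit_square_measure.
    dnint ((f ^^ n) (fst \<omega>) - (f ^^ n) (snd \<omega>)) < real n powr (- \<beta>)}" for n
  have [measurable]: "(f ^^ n) \<in> borel_measurable borel" for n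
    using piecewise_translation_funpow[OF f] by (simp add: piecewise_translation_def)
  have G_sets: "G n \<in> sets unit_square_measure" for n
    unfolding G_def by measurable
  have "summable (\<lambda>n. 6 * real n powr (- \<beta>))"
    using \<beta> by (intro summable_mult) (simp add: summable_real_powr_iff)
  moreover have "norm (measure unit_square_measure (G n)) \<le> 6 * real n powr (- \<beta>)" for n
  proof -
    have "measure unit_square_measure (G n) \<le> 6 * real n powr (- \<beta>)"
      unfolding G_def measure_def
      using emeasure_close_orbits_le[OF f, of n "real n powr (- \<beta>)"] by (intro enn2real_leI) simp_all
    then show ?thesis
      by simp
  qed
  ultimately have "summable (\<lambda>n. measure unit_square_measure (G n))"
    by (rule summable_comparison_test')
  then show ?thesis
  proof (rule unit_square.not_AE_liminf_eq_0[OF G_sets])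
    fix \<omega> assume \<omega>: "\<omega> \<in> space unit_square_measure"
      and far: "eventually (\<lambda>n. \<omega> \<notin> G n) sequentially"
    show "eventually (\<lambda>n. 1 \<le> real n powr \<alpha> * dnint ((f ^^ n) (fst \<omega>) - (f ^^ n) (snd \<omega>)))
        sequentially"
      using far eventually_ge_at_top[of "1::nat"]
    proof eventually_elim
      case (elim n)
      then have "real n powr (- \<beta>) \<le> dnint ((f ^^ n) (fst \<omega>) - (f ^^ n) (snd \<omega>))"
        using \<omega> by (simp add: G_def not_less)
      then show ?case
        using elim \<beta> by (intro one_le_powr_mult[of _ \<beta>]) auto
    qed
  qed
qed

lemma not_approaches_at_rate_gt_tau_entropy:
  assumes f: "piecewise_translation f" and "tau_entropy f < ereal \<alpha>"
  shows "\<not> approaches_at_rate f \<alpha>"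
proof -
  obtain \<gamma> where \<gamma>: "tau_entropy f < ereal \<gamma>" "\<gamma> < \<alpha>"
    using ereal_dense2[OF assms(2)] by auto
  have "ereal 0 < ereal \<gamma>"
    using tau_entropy_nonneg[of f] \<gamma>(1) by (metis zero_ereal_def le_less_trans)
  then have "0 \<le> \<gamma>"
    by simp
  define \<beta> where "\<beta> = (\<gamma> + \<alpha>) / 2"
  have \<beta>: "\<gamma> < \<beta>" "\<beta> < \<alpha>"
    using \<gamma> by (auto simp: \<beta>_def)
  define D where "D k = Delta'_n f (2 ^ (k + 1))" for k
  define \<epsilon> where "\<epsilon> k = (2 powr (- \<beta>)) ^ k" for k :: nat
  define G where "G k = {\<omega>\<in>space unit_square_measure. \<exists>d\<in>D k. dnint (fst \<omega> - snd \<omega> + d) < \<epsilon> k}"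
    for k
  have D: "finite (D k)" for k
    unfolding D_def using f by (rule finite_Delta'_n)
  have G_sets: "G k \<in> sets unit_square_measure" for k
    unfolding G_def using D[of k] by measurable
  obtain N0 where N0: "\<And>N. N0 \<le> N \<Longrightarrow> real (card (Delta'_n f N)) \<le> real N powr \<gamma>"
    using eventually_card_Delta'_n_le_powr[OF \<gamma>(1)] unfolding eventually_sequentially by blast
  have "summable (\<lambda>k. 6 * 2 powr \<gamma> * (2 powr (\<gamma> - \<beta>)) ^ k)"
    using \<beta> by (intro summable_mult summable_geometric) (simp add: powr_less_one)
  moreover have "norm (measure unit_square_measure (G k)) \<le> 6 * 2 powr \<gamma> * (2 powr (\<gamma> - \<beta>)) ^ k"
    if "N0 \<le> k" for k
  proof -
    have "N0 \<le> 2 ^ (k + 1)"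
      using that less_exp[of "k + 1"] by linarith
    then have "real (card (D k)) \<le> real (2 ^ (k + 1)) powr \<gamma>"
      unfolding D_def by (rule N0)
    also have "\<dots> = (2 powr \<gamma>) ^ (k + 1)"
      using power_powr[of 2 "k + 1" \<gamma>] by simp
    finally have "real (card (D k)) * (6 * \<epsilon> k) \<le> (2 powr \<gamma>) ^ (k + 1) * (6 * \<epsilon> k)"
      by (intro mult_right_mono) (simp_all add: \<epsilon>_def)
    also have "\<dots> = 6 * 2 powr \<gamma> * (2 powr \<gamma> * 2 powr (- \<beta>)) ^ k"
      by (simp add: \<epsilon>_def power_mult_distrib)
    also have "2 powr \<gamma> * 2 powr (- \<beta>) = 2 powr (\<gamma> - \<beta>)"
      by (simp add: powr_add[symmetric])
    finally have bound: "real (card (D k)) * (6 * \<epsilon> k) \<le> 6 * 2 powr \<gamma> * (2 powr (\<gamma> - \<beta>)) ^ k" .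
    have "emeasure unit_square_measure (G k) \<le> ennreal (real (card (D k)) * (6 * \<epsilon> k))"
      unfolding G_def by (rule emeasure_near_shifted_diagonals_le[OF D])
    then have "measure unit_square_measure (G k) \<le> real (card (D k)) * (6 * \<epsilon> k)"
      unfolding measure_def by (intro enn2real_leI) (simp_all add: \<epsilon>_def)
    with bound have "measure unit_square_measure (G k) \<le> 6 * 2 powr \<gamma> * (2 powr (\<gamma> - \<beta>)) ^ k"
      by linarith
    then show ?thesis
      by simp
  qed
  ultimately have "summable (\<lambda>k. measure unit_square_measure (G k))"
    by (rule summable_comparison_test')
  text \<open>For 2^k \<le> n < 2^(k+1) every difference of the n-th iterates is, mod 1, one of the
    shifts x - y + d with d \<in> D k, so the single exceptional set G k covers the whole dyadic block.\<close>
  then show ?thesis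
  proof (rule unit_square.not_AE_liminf_eq_0[OF G_sets])
    fix \<omega> assume \<omega>: "\<omega> \<in> space unit_square_measure"
    assume "eventually (\<lambda>k. \<omega> \<notin> G k) sequentially"
    then show "eventually (\<lambda>n. 1 \<le> real n powr \<alpha> * dnint ((f ^^ n) (fst \<omega>) - (f ^^ n) (snd \<omega>)))
        sequentially"
    proof (rule eventually_mono[OF eventually_dyadic_block])
      fix n :: nat assume "\<exists>k. 2 ^ k \<le> n \<and> n < 2 ^ (k + 1) \<and> \<omega> \<notin> G k"
      then obtain k where k: "2 ^ k \<le> n" "n < 2 ^ (k + 1)" "\<omega> \<notin> G k"
        by blast
      have "1 \<le> n"
        using k(1) order.trans[OF one_le_power k(1)] by simp
      then obtain d where "d \<in> D k"
        and d: "dnint ((f ^^ n) (fst \<omega>) - (f ^^ n) (snd \<omega>)) = dnint (fst \<omega> - snd \<omega> + d)"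
        using dnint_funpow_diff_eq[of "fst \<omega>" "snd \<omega>" n "2 ^ (k + 1)" f] \<omega> k unfolding D_def
        by (auto simp: mem_Times_iff)
      then have "\<epsilon> k \<le> dnint ((f ^^ n) (fst \<omega>) - (f ^^ n) (snd \<omega>))"
        using \<omega> k(3) by (auto simp: G_def not_less)
      moreover have "real n powr (- \<beta>) \<le> real (2 ^ k) powr (- \<beta>)"
        using k(1) \<beta> \<open>0 \<le> \<gamma>\<close> by (intro powr_mono2') auto
      moreover have "real (2 ^ k) powr (- \<beta>) = \<epsilon> k"
        using power_powr[of 2 k "- \<beta>"] by (simp add: \<epsilon>_def)
      ultimately show "1 \<le> real n powr \<alpha> * dnint ((f ^^ n) (fst \<omega>) - (f ^^ n) (snd \<omega>))"
        using \<open>1 \<le> n\<close> \<beta> by (intro one_le_powr_mult[of _ \<beta>]) auto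
    qed
  qed
qed

section \<open>Interval exchange transformations\<close>

locale interval_exchange =
  fixes r :: nat and p :: "nat \<Rightarrow> nat" and l :: "nat \<Rightarrow> real"
  assumes permutes: "p permutes {1..r}"
    and lengths_pos: "\<forall>i\<in>{1..r}. 0 < l i"
    and lengths_sum: "(\<Sum>i\<in>{1..r}. l i) = 1"
begin

abbreviation s :: "nat \<Rightarrow> real" where
  "s \<equiv> iet_s l"

definition in_piece :: "real \<Rightarrow> nat \<Rightarrow> bool" where
  "in_piece x k \<longleftrightarrow> k \<in> {1..r} \<and> s (k - 1) \<le> x \<and> x < s k"

definition piece :: "real \<Rightarrow> nat" where
  "piece x = (THE k. in_piece x k)"

definition image_start :: "nat \<Rightarrow> real" where
  "image_start k = (\<Sum>i\<in>{i\<in>{1..r}. p i < p k}. l i)"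

definition shift :: "nat \<Rightarrow> real" where
  "shift k = image_start k - s (k - 1)"

lemma iet_eq: "iet r p l x = x + shift (piece x)"
  by (simp add: iet_def Let_def piece_def in_piece_def shift_def image_start_def)

lemma s_Suc: "s (Suc k) = s k + l (Suc k)"
  by (simp add: iet_s_def)

lemma s_eq: "k \<in> {1..r} \<Longrightarrow> s k = s (k - 1) + l k"
  using s_Suc[of "k - 1"] by simp

lemma s_mono: "m \<le> m' \<Longrightarrow> m' \<le> r \<Longrightarrow> s m \<le> s m'"
proof (induction m' rule: dec_induct)
  case (step n)
  then have "0 < l (Suc n)"
    using lengths_pos by auto
  then show ?case
    using step by (simp add: s_Suc)
qed simp

lemma s_bounds: "k \<le> r \<Longrightarrow> 0 \<le> s k \<and> s k \<le> 1"
  using s_mono[of 0 k] s_mono[of k r] lengths_sum by (simp add: iet_s_def)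

lemma in_piece_unique: "in_piece x k \<Longrightarrow> in_piece x j \<Longrightarrow> k = j"
proof (induction k j rule: linorder_wlog)
  case (le k j)
  show ?case
  proof (rule ccontr)
    assume "k \<noteq> j"
    then have "s k \<le> s (j - 1)"
      using le by (intro s_mono) (auto simp: in_piece_def)
    then show False
      using le by (auto simp: in_piece_def)
  qed
qed (simp add: eq_commute)

lemma ex_in_piece:
  assumes "x \<in> {0..<1}"
  shows "\<exists>k. in_piece x k"
proof -
  have below: "x < s r"
    using assms lengths_sum by (simp add: iet_s_def)
  define k where "k = (LEAST k. x < s k)"
  have "x < s k"
    unfolding k_def using below by (rule LeastI)
  moreover have "k \<le> r"
    unfolding k_def using below by (rule Least_le)
  moreover have "k \<noteq> 0"
    using \<open>x < s k\<close> assms by (cases k) (auto simp: iet_s_def)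
  moreover have "\<not> x < s (k - 1)"
    using \<open>k \<noteq> 0\<close> not_less_Least[of "k - 1" "\<lambda>k. x < s k"] unfolding k_def by simp
  ultimately show ?thesis
    unfolding in_piece_def by (intro exI[of _ k]) (auto simp: not_less)
qed

lemma in_piece_piece: "x \<in> {0..<1} \<Longrightarrow> in_piece x (piece x)"
  unfolding piece_def using ex_in_piece in_piece_unique by (metis theI)

lemma piece_eqI: "in_piece x k \<Longrightarrow> piece x = k"
  unfolding piece_def using in_piece_unique by blast

lemma piece_outside:
  assumes "x \<notin> {0..<1}"
  shows "piece x = (THE k. False)"
proof -
  have "in_piece x = (\<lambda>k. False)"
  proof (intro ext iffI)
    fix k assume k: "in_piece x k"
    then have "0 \<le> s (k - 1)" "s k \<le> 1"
      using s_bounds by (auto simp: in_piece_def)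
    then show False
      using assms k by (auto simp: in_piece_def)
  qed simp
  then show ?thesis
    by (simp add: piece_def)
qed

lemma image_start_nonneg: "0 \<le> image_start k"
  unfolding image_start_def using lengths_pos by (auto intro!: sum_nonneg intro: less_imp_le)

lemma image_start_add_le:
  assumes "k \<in> {1..r}" "j \<in> {1..r}" "p k < p j"
  shows "image_start k + l k \<le> image_start j"
proof -
  have "image_start k + l k = (\<Sum>i\<in>insert k {i\<in>{1..r}. p i < p k}. l i)"
    by (simp add: image_start_def)
  also have "\<dots> \<le> image_start j"
    unfolding image_start_def using assms lengths_pos by (intro sum_mono2) (auto intro: less_imp_le)
  finally show ?thesis .
qed

lemma image_start_add_le_1:
  assumes "k \<in> {1..r}"
  shows "image_start k + l k \<le> 1"
proof -
  have "image_start k + l k = (\<Sum>i\<in>insert k {i\<in>{1..r}. p i < p k}. l i)"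
    by (simp add: image_start_def)
  also have "\<dots> \<le> (\<Sum>i\<in>{1..r}. l i)"
    using assms lengths_pos by (intro sum_mono2) (auto intro: less_imp_le)
  finally show ?thesis
    using lengths_sum by simp
qed

lemma iet_in_image_of_piece:
  assumes "x \<in> {0..<1}"
  shows "image_start (piece x) \<le> iet r p l x" "iet r p l x < image_start (piece x) + l (piece x)"
proof -
  have "in_piece x (piece x)"
    using assms by (rule in_piece_piece)
  moreover from this have "s (piece x) = s (piece x - 1) + l (piece x)"
    by (intro s_eq) (simp add: in_piece_def)
  ultimately show "image_start (piece x) \<le> iet r p l x" "iet r p l x < image_start (piece x) + l (piece x)"
    by (auto simp: iet_eq shift_def in_piece_def)
qed

lemma piece_mem: "x \<in> {0..<1} \<Longrightarrow> piece x \<in> {1..r}"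
  using in_piece_piece by (simp add: in_piece_def)

lemma iet_mem_unit_interval: "x \<in> {0..<1} \<Longrightarrow> iet r p l x \<in> {0..<1}"
  using iet_in_image_of_piece[of x] image_start_nonneg[of "piece x"]
    image_start_add_le_1[OF piece_mem, of x] by auto

lemma inj_on_iet: "inj_on (iet r p l) {0..<1}"
proof (rule inj_onI)
  fix x y assume x: "x \<in> {0..<1}" and y: "y \<in> {0..<1}" and eq: "iet r p l x = iet r p l y"
  have "piece x = piece y"
  proof (rule ccontr)
    assume "piece x \<noteq> piece y"
    then have "p (piece x) \<noteq> p (piece y)"
      using permutes_inj[OF permutes] by (auto dest: injD)
    then consider "p (piece x) < p (piece y)" | "p (piece y) < p (piece x)"
      by linarith
    then show False
    proof cases
      case 1
      with image_start_add_le[OF piece_mem[OF x] piece_mem[OF y]] show False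
        using iet_in_image_of_piece[OF x] iet_in_image_of_piece[OF y] eq by linarith
    next
      case 2
      with image_start_add_le[OF piece_mem[OF y] piece_mem[OF x]] show False
        using iet_in_image_of_piece[OF x] iet_in_image_of_piece[OF y] eq by linarith
    qed
  qed
  then show "x = y"
    using eq by (simp add: iet_eq)
qed

lemma iet_eq_sum_indicator:
  "iet r p l x = x + (if x \<in> {0..<1}
     then (\<Sum>k\<in>{1..r}. indicator {s (k - 1)..<s k} x * shift k) else shift (THE k. False))"
proof (cases "x \<in> {0..<1}")
  case True
  have "(\<Sum>k\<in>{1..r}. indicator {s (k - 1)..<s k} x * shift k)
      = (\<Sum>k\<in>{1..r}. if k = piece x then shift k else 0)"
  proof (rule sum.cong[OF refl])
    fix k assume k: "k \<in> {1..r}"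
    show "indicator {s (k - 1)..<s k} x * shift k = (if k = piece x then shift k else 0)"
    proof (cases "x \<in> {s (k - 1)..<s k}")
      case True
      with k have "piece x = k"
        by (intro piece_eqI) (simp add: in_piece_def)
      with True show ?thesis
        by simp
    next
      case False
      with in_piece_piece[of x] \<open>x \<in> {0..<1}\<close> have "piece x \<noteq> k"
        by (auto simp: in_piece_def)
      with False show ?thesis
        by simp
    qed
  qed
  also have "\<dots> = shift (piece x)"
    using piece_mem[OF True] by simp
  finally show ?thesis
    using True by (simp add: iet_eq)
next
  case False
  show ?thesis
    by (simp only: iet_eq piece_outside[OF False] if_not_P[OF False])
qed

lemma borel_measurable_iet: "iet r p l \<in> borel_measurable borel"
  unfolding iet_eq_sum_indicator[abs_def] by measurable

lemma piecewise_translation_iet: "piecewise_translation (iet r p l)"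
proof -
  have "(\<lambda>x. iet r p l x - x) ` {0..<1} \<subseteq> shift ` {1..r}"
    using piece_mem by (auto simp: iet_eq)
  then have "finite ((\<lambda>x. iet r p l x - x) ` {0..<1})"
    by (rule finite_subset) simp
  moreover have "iet r p l ` {0..<1} \<subseteq> {0..<1}"
    using iet_mem_unit_interval by blast
  ultimately show ?thesis
    using borel_measurable_iet inj_on_iet unfolding piecewise_translation_def by blast
qed

end

theorem theorem11p3:
  fixes r :: nat and p :: "nat \<Rightarrow> nat" and l :: "nat \<Rightarrow> real"
  assumes "r \<ge> 1"
    and "p permutes {1..r}"
    and "\<forall>i\<in>{1..r}. l i > 0"
    and "(\<Sum>i\<in>{1..r}. l i) = 1"
  shows "C_psi (iet r p l) \<le> min 1 (tau_entropy (iet r p l))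
     \<and> (tau_entropy (iet r p l) = 0 \<longrightarrow> C_psi (iet r p l) = 0)"
proof -
  have T: "piecewise_translation (iet r p l)"
    using assms by (simp add: interval_exchange.piecewise_translation_iet interval_exchange_def)
  have "C_psi (iet r p l) \<le> 1"
  proof (rule C_psi_le)
    fix \<alpha> :: real assume "1 < ereal \<alpha>"
    then show "\<not> approaches_at_rate (iet r p l) \<alpha>"
      by (intro not_approaches_at_rate_gt_one[OF T]) simp
  qed simp
  moreover have "C_psi (iet r p l) \<le> tau_entropy (iet r p l)"
  proof (rule C_psi_le[OF tau_entropy_nonneg])
    fix \<alpha> :: real assume "tau_entropy (iet r p l) < ereal \<alpha>"
    then show "\<not> approaches_at_rate (iet r p l) \<alpha>"
      by (rule not_approaches_at_rate_gt_tau_entropy[OF T])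
  qed
  moreover have "0 \<le> C_psi (iet r p l)"
    by (rule C_psi_nonneg)
  ultimately show ?thesis
    by (simp add: order_antisym)
qed

end
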